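(* Let $M$ be a simple binary matroid and $C$ a circuit of $M$. The following are equivalent: (1) $C\notin B_M$; (2) there are circuits $C_1,C_2$ of $M$ such that $|C_1\cap C_2|=1$ and $C_1\triangle C_2=C$.
   Context: A matroid $M=([n],\mathscr C)$ is given by its circuit set $\mathscr C$. It is simple if every circuit has cardinality greater than $2$, and binary if it is representable over $\mathbb F_2$. Let ${\bf TP}^{n-1}$ be the tropical projective space over $(\mathbb R\cup\{-\infty\},\max,+)$. For a circuit $C$, $V(C)$ is the set of $x\in{\bf TP}^{n-1}$ such that $\max\{x_i:i\in C\}$ is attained at least twice. For $B\subseteq\mathscr C$, set $V(B)=\bigcap_{C\in B}V(C)$. A subset $B\subseteq\mathscr C$ is a tropical basis if $V(B)=V(\mathscr C)$. $B_M$ denotes the intersection of all tropical bases of $M$. $\triangle$ denotes symmetric difference. *)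

theory Defs
  imports Main "HOL-Library.Z2" "HOL-Library.Extended_Real"
begin

definition matroid_circuits :: "nat \<Rightarrow> nat set set \<Rightarrow> bool" where
  "matroid_circuits n \<C> \<longleftrightarrow>
     (\<forall>C\<in>\<C>. C \<subseteq> {1..n}) \<and>
     {} \<notin> \<C> \<and>
     (\<forall>C1\<in>\<C>. \<forall>C2\<in>\<C>. C1 \<subseteq> C2 \<longrightarrow> C1 = C2) \<and>
     (\<forall>C1\<in>\<C>. \<forall>C2\<in>\<C>. \<forall>e. C1 \<noteq> C2 \<and> e \<in> C1 \<inter> C2 \<longrightarrow>
        (\<exists>C3\<in>\<C>. C3 \<subseteq> (C1 \<union> C2) - {e}))"

definition simple_matroid :: "nat set set \<Rightarrow> bool" where
  "simple_matroid \<C> \<longleftrightarrow> (\<forall>C\<in>\<C>. card C > 2)"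

text \<open>Linear dependence over GF(2) of the family of vectors v i (i in S),
  vectors in GF(2)^m being represented by their coordinate functions.
  Over GF(2), a family is dependent iff some nonempty subfamily sums to zero.\<close>

definition f2_dependent :: "nat \<Rightarrow> (nat \<Rightarrow> nat \<Rightarrow> bit) \<Rightarrow> nat set \<Rightarrow> bool" where
  "f2_dependent m v S \<longleftrightarrow>
     (\<exists>T. T \<subseteq> S \<and> T \<noteq> {} \<and> (\<forall>j<m. (\<Sum>i\<in>T. v i j) = 0))"

definition binary_matroid :: "nat \<Rightarrow> nat set set \<Rightarrow> bool" where
  "binary_matroid n \<C> \<longleftrightarrow>
     (\<exists>m. \<exists>v :: nat \<Rightarrow> nat \<Rightarrow> bit.
        \<C> = {C. C \<subseteq> {1..n} \<and> f2_dependent m v C \<and>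
                 (\<forall>D. D \<subset> C \<longrightarrow> \<not> f2_dependent m v D)})"

text \<open>Points of the tropical projective space TP^(n-1), represented by
  representatives x : [n] -> R \<union> {-\<infinity>}, not all -\<infinity>
  (all sets below are invariant under tropical scaling).\<close>

definition TP :: "nat \<Rightarrow> (nat \<Rightarrow> ereal) set" where
  "TP n = {x. (\<forall>i\<in>{1..n}. x i \<noteq> \<infinity>) \<and> (\<exists>i\<in>{1..n}. x i \<noteq> -\<infinity>)
             \<and> (\<forall>i. i \<notin> {1..n} \<longrightarrow> x i = -\<infinity>)}"

definition Vcirc :: "nat \<Rightarrow> nat set \<Rightarrow> (nat \<Rightarrow> ereal) set" where
  "Vcirc n C = {x \<in> TP n. \<exists>i\<in>C. \<exists>j\<in>C. i \<noteq> j \<and>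
                   x i = Max (x ` C) \<and> x j = Max (x ` C)}"

definition Vset :: "nat \<Rightarrow> nat set set \<Rightarrow> (nat \<Rightarrow> ereal) set" where
  "Vset n B = {x \<in> TP n. \<forall>C\<in>B. x \<in> Vcirc n C}"

definition tropical_basis :: "nat \<Rightarrow> nat set set \<Rightarrow> nat set set \<Rightarrow> bool" where
  "tropical_basis n \<C> B \<longleftrightarrow> B \<subseteq> \<C> \<and> Vset n B = Vset n \<C>"

definition BM :: "nat \<Rightarrow> nat set set \<Rightarrow> nat set set" where
  "BM n \<C> = \<Inter> {B. tropical_basis n \<C> B}"

end

theory Submission
  imports Defs
begin

(* C is dispensable from every tropical basis iff V(\<C> - {C}) \<subseteq> V(C).
   If C = C1 \<triangle> C2 with C1 \<inter> C2 = {e}, take x \<in> V(C1) \<inter> V(C2) and a \<in> C, say a \<in> C1.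
   Some b \<in> C1 - {a} has x b \<ge> x a; either b \<in> C, or b = e and then some
   r \<in> C2 - {e} \<subseteq> C has x r \<ge> x e \<ge> x a.  So the maximum of x on C is attained twice.
   Conversely, the point that is 0 on C - {i} and 1 elsewhere has a strict maximum
   on C, hence on some other circuit D, which forces D = insert a D' with D' \<subseteq> C
   and a \<notin> C.  Using twice that the symmetric difference of two circuits of a
   binary matroid contains a circuit, insert a (C - D) is a circuit; it meets D
   only in a, and its symmetric difference with D is C. *)

lemma bit_add_self: "(b::bit) + b = 0"
  by (cases b) simp_all

lemma sum_sym_diff_bit:
  fixes f :: "'a \<Rightarrow> bit"
  assumes "finite A" "finite B"
  shows "sum f (sym_diff A B) = sum f A + sum f B"
proof -
  have "sum f (A \<union> B) = sum f (A \<union> B - A \<inter> B) + sum f (A \<inter> B)"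
    using assms by (intro sum.subset_diff) auto
  also have "A \<union> B - A \<inter> B = sym_diff A B"
    by blast
  finally have "sum f (A \<union> B) = sum f (sym_diff A B) + sum f (A \<inter> B)" .
  then have "sum f A + sum f B = sum f (sym_diff A B) + (sum f (A \<inter> B) + sum f (A \<inter> B))"
    by (simp only: sum.union_inter[OF assms, symmetric] add.assoc)
  then show ?thesis
    by (simp only: bit_add_self add_0_right)
qed

lemma f2_dependent_minimal_subset:
  assumes "finite S" "f2_dependent m v S"
  obtains T where "T \<subseteq> S" "f2_dependent m v T" "\<And>D. D \<subset> T \<Longrightarrow> \<not> f2_dependent m v D"
proof -
  let ?A = "{T. T \<subseteq> S \<and> f2_dependent m v T}"
  have "finite ?A" using assms(1) by simp
  moreover have "S \<in> ?A" using assms(2) by simp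
  ultimately obtain T where T: "T \<in> ?A" "\<forall>D\<in>?A. D \<le> T \<longrightarrow> T = D"
    using finite_has_minimal2[of ?A S] by blast
  moreover have "\<not> f2_dependent m v D" if "D \<subset> T" for D
    using T that by blast
  ultimately show ?thesis
    using that by blast
qed

lemma binary_matroid_sym_diff:
  assumes "binary_matroid n \<C>" "C1 \<in> \<C>" "C2 \<in> \<C>" "C1 \<noteq> C2"
  obtains C3 where "C3 \<in> \<C>" "C3 \<subseteq> sym_diff C1 C2"
proof -
  obtain m v where \<C>_eq: "\<C> = {C. C \<subseteq> {1..n} \<and> f2_dependent m v C \<and>
      (\<forall>D. D \<subset> C \<longrightarrow> \<not> f2_dependent m v D)}"
    using assms(1) unfolding binary_matroid_def by blast
  have circuit_sum: "(\<Sum>i\<in>C. v i j) = 0" if "C \<in> \<C>" "j < m" for C j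
  proof -
    obtain T where T: "T \<subseteq> C" "T \<noteq> {}" "\<forall>j<m. (\<Sum>i\<in>T. v i j) = 0"
      using \<open>C \<in> \<C>\<close> \<C>_eq unfolding f2_dependent_def by blast
    then have "T = C"
      using \<open>C \<in> \<C>\<close> \<C>_eq unfolding f2_dependent_def by blast
    with T \<open>j < m\<close> show ?thesis by simp
  qed
  have fin: "finite C1" "finite C2"
    using assms(2,3) \<C>_eq by (auto intro: finite_subset)
  have "f2_dependent m v (sym_diff C1 C2)"
    unfolding f2_dependent_def
    using assms(2-4) circuit_sum sum_sym_diff_bit[OF fin] by (intro exI[of _ "sym_diff C1 C2"]) auto
  then obtain T where "T \<subseteq> sym_diff C1 C2" "f2_dependent m v T"
      "\<And>D. D \<subset> T \<Longrightarrow> \<not> f2_dependent m v D"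
    using f2_dependent_minimal_subset fin by (metis finite_Diff finite_UnI)
  moreover have "T \<subseteq> {1..n}"
    using \<open>T \<subseteq> sym_diff C1 C2\<close> assms(2,3) \<C>_eq by blast
  ultimately show ?thesis
    using that \<C>_eq by blast
qed

lemma matroid_circuits_antichain:
  "matroid_circuits n \<C> \<Longrightarrow> C1 \<in> \<C> \<Longrightarrow> C2 \<in> \<C> \<Longrightarrow> C1 \<subseteq> C2 \<Longrightarrow> C1 = C2"
  unfolding matroid_circuits_def by (elim conjE) blast

lemma matroid_circuits_subset:
  "matroid_circuits n \<C> \<Longrightarrow> C \<in> \<C> \<Longrightarrow> C \<subseteq> {1..n}"
  unfolding matroid_circuits_def by (elim conjE) blast

lemma binary_insert_diff_circuit:
  assumes "matroid_circuits n \<C>" "binary_matroid n \<C>" "C \<in> \<C>" "D \<in> \<C>"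
    and "a \<in> D - C" "D - {a} \<subseteq> C" "D \<noteq> {a}"
  shows "insert a (C - D) \<in> \<C>"
proof -
  have "C \<noteq> D"
    using assms(5) by blast
  then obtain C3 where C3: "C3 \<in> \<C>" "C3 \<subseteq> sym_diff C D"
    by (rule binary_matroid_sym_diff[OF assms(2,3,4)])
  have sym_diff_CD: "sym_diff C D = insert a (C - D)"
    using assms(5,6) by blast
  obtain d where d: "d \<in> D" "d \<in> C" "d \<noteq> a"
    using assms(5-7) by auto
  have "a \<in> C3"
  proof (rule ccontr)
    assume "a \<notin> C3"
    then have "C3 \<subseteq> C"
      using C3(2) sym_diff_CD by blast
    then have "C3 = C"
      using matroid_circuits_antichain[OF assms(1) C3(1) assms(3)] by blast
    then show False
      using C3(2) d(1,2) by blast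
  qed
  have "C3 \<noteq> D"
    using C3(2) d(1,2) by blast
  then obtain C4 where C4: "C4 \<in> \<C>" "C4 \<subseteq> sym_diff C3 D"
    by (rule binary_matroid_sym_diff[OF assms(2) C3(1) assms(4)])
  have "sym_diff C3 D \<subseteq> C"
    using C3(2) \<open>a \<in> C3\<close> assms(6) by auto
  then have "C4 = C"
    using C4(2) matroid_circuits_antichain[OF assms(1) C4(1) assms(3)] by blast
  then have "C - D \<subseteq> C3"
    using C4(2) by blast
  then show ?thesis
    using C3 sym_diff_CD \<open>a \<in> C3\<close> by (metis insert_subsetI subset_antisym)
qed

lemma Vcirc_iff_no_strict_max:
  assumes "finite D"
  shows "x \<in> Vcirc n D \<longleftrightarrow> x \<in> TP n \<and> D \<noteq> {} \<and> (\<forall>a\<in>D. \<exists>b\<in>D. b \<noteq> a \<and> x a \<le> x b)"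
proof
  assume "x \<in> Vcirc n D"
  then obtain i j where ij: "x \<in> TP n" "i \<in> D" "j \<in> D" "i \<noteq> j"
      "x i = Max (x ` D)" "x j = Max (x ` D)"
    unfolding Vcirc_def by blast
  have "\<exists>b\<in>D. b \<noteq> a \<and> x a \<le> x b" if "a \<in> D" for a
  proof -
    have "x a \<le> Max (x ` D)"
      using assms that by simp
    then show ?thesis
      using ij by (cases "a = i") auto
  qed
  with ij show "x \<in> TP n \<and> D \<noteq> {} \<and> (\<forall>a\<in>D. \<exists>b\<in>D. b \<noteq> a \<and> x a \<le> x b)"
    by blast
next
  assume R: "x \<in> TP n \<and> D \<noteq> {} \<and> (\<forall>a\<in>D. \<exists>b\<in>D. b \<noteq> a \<and> x a \<le> x b)"
  have "Max (x ` D) \<in> x ` D"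
    using assms R by simp
  then obtain a where a: "a \<in> D" "x a = Max (x ` D)"
    by (metis imageE)
  with R obtain b where b: "b \<in> D" "b \<noteq> a" "x a \<le> x b"
    by blast
  have "x b \<le> Max (x ` D)"
    using assms b(1) by simp
  then have "x b = Max (x ` D)"
    using a(2) b(3) by simp
  with R a b show "x \<in> Vcirc n D"
    unfolding Vcirc_def by blast
qed

lemma Vcirc_sym_diff:
  assumes "finite C1" "finite C2" "C1 \<inter> C2 = {e}"
    and "x \<in> Vcirc n C1" "x \<in> Vcirc n C2"
  shows "x \<in> Vcirc n (sym_diff C1 C2)"
proof -
  have dominated: "\<exists>b\<in>sym_diff C1 C2. b \<noteq> a \<and> x a \<le> x b"
    if fin: "finite C1" "finite C2" and common: "C1 \<inter> C2 = {e}"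
      and V: "x \<in> Vcirc n C1" "x \<in> Vcirc n C2" and a: "a \<in> C1 - C2" for C1 C2 a
  proof -
    have ties1: "\<forall>a\<in>C1. \<exists>b\<in>C1. b \<noteq> a \<and> x a \<le> x b"
      using fin(1) V(1) Vcirc_iff_no_strict_max by blast
    have ties2: "\<forall>a\<in>C2. \<exists>b\<in>C2. b \<noteq> a \<and> x a \<le> x b"
      using fin(2) V(2) Vcirc_iff_no_strict_max by blast
    obtain b where b: "b \<in> C1" "b \<noteq> a" "x a \<le> x b"
      using ties1 a by blast
    show ?thesis
    proof (cases "b = e")
      case False
      then show ?thesis
        using b common by blast
    next
      case True
      have "e \<in> C2"
        using common by blast
      then obtain r where r: "r \<in> C2" "r \<noteq> e" "x e \<le> x r"
        using ties2 by blast
      have "r \<in> C2 - C1" "r \<noteq> a"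
        using r(1,2) common a by blast+
      moreover have "x a \<le> x r"
        using b(3) r(3) True by simp
      ultimately show ?thesis
        by blast
    qed
  qed
  have "finite (sym_diff C1 C2)"
    using assms(1,2) by blast
  moreover have "x \<in> TP n"
    using assms(4) unfolding Vcirc_def by blast
  moreover obtain i j where "i \<in> C1" "j \<in> C1" "i \<noteq> j"
    using assms(4) unfolding Vcirc_def by blast
  then have "sym_diff C1 C2 \<noteq> {}"
    using assms(3) by auto
  moreover have "sym_diff C2 C1 = sym_diff C1 C2" "C2 \<inter> C1 = {e}"
    using assms(3) by auto
  then have "\<exists>b\<in>sym_diff C1 C2. b \<noteq> a \<and> x a \<le> x b" if "a \<in> sym_diff C1 C2" for a
    using that dominated[OF assms] dominated[OF assms(2,1) _ assms(5,4), of a] by blast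
  ultimately show ?thesis
    using Vcirc_iff_no_strict_max[of "sym_diff C1 C2" x n] by blast
qed

definition dip_point :: "nat \<Rightarrow> nat set \<Rightarrow> nat \<Rightarrow> ereal" where
  "dip_point n S k = (if k \<in> {1..n} then if k \<in> S then 0 else 1 else -\<infinity>)"

lemma dip_point_TP: "0 < n \<Longrightarrow> dip_point n S \<in> TP n"
  unfolding TP_def dip_point_def by (auto intro: bexI[of _ 1])

lemma dip_point_less_iff:
  "a \<in> {1..n} \<Longrightarrow> b \<in> {1..n} \<Longrightarrow> dip_point n S b < dip_point n S a \<longleftrightarrow> b \<in> S \<and> a \<notin> S"
  by (simp add: dip_point_def)

lemma dip_point_notin_Vcirc_iff:
  assumes "D \<subseteq> {1..n}" "2 \<le> card D"
  shows "dip_point n S \<notin> Vcirc n D \<longleftrightarrow> (\<exists>a\<in>D - S. D - {a} \<subseteq> S)"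
proof -
  have "finite D"
    using assms(1) by (rule finite_subset) simp
  have "D \<noteq> {}"
    using assms(2) by auto
  then have "dip_point n S \<in> TP n"
    using assms(1) by (intro dip_point_TP) auto
  with \<open>finite D\<close> \<open>D \<noteq> {}\<close> have "dip_point n S \<notin> Vcirc n D \<longleftrightarrow>
      (\<exists>a\<in>D. \<forall>b\<in>D. b \<noteq> a \<longrightarrow> dip_point n S b < dip_point n S a)"
    by (auto simp: Vcirc_iff_no_strict_max not_le)
  also have "\<dots> \<longleftrightarrow> (\<exists>a\<in>D. \<forall>b\<in>D. b \<noteq> a \<longrightarrow> b \<in> S \<and> a \<notin> S)"
    using assms(1) dip_point_less_iff by (metis subsetD)
  also have "\<dots> \<longleftrightarrow> (\<exists>a\<in>D - S. D - {a} \<subseteq> S)"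
  proof -
    have "D - {a} \<noteq> {}" if "a \<in> D" for a
    proof -
      have "card (D - {a}) \<noteq> 0"
        using card_Diff_singleton[OF that] assms(2) by simp
      then show ?thesis
        by (metis card.empty)
    qed
    then show ?thesis
      by blast
  qed
  finally show ?thesis .
qed

lemma notin_BM_iff:
  assumes "C \<in> \<C>"
  shows "C \<notin> BM n \<C> \<longleftrightarrow> Vset n (\<C> - {C}) \<subseteq> Vcirc n C"
proof
  assume "C \<notin> BM n \<C>"
  then obtain B where "B \<subseteq> \<C> - {C}" "Vset n B = Vset n \<C>"
    unfolding BM_def tropical_basis_def by blast
  then show "Vset n (\<C> - {C}) \<subseteq> Vcirc n C"
    using assms unfolding Vset_def by blast
next
  assume "Vset n (\<C> - {C}) \<subseteq> Vcirc n C"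
  then have "tropical_basis n \<C> (\<C> - {C})"
    unfolding tropical_basis_def Vset_def by blast
  then show "C \<notin> BM n \<C>"
    unfolding BM_def by blast
qed

lemma redundant_circuit_splits:
  assumes "matroid_circuits n \<C>" "binary_matroid n \<C>" "\<And>D. D \<in> \<C> \<Longrightarrow> 2 \<le> card D"
    and "C \<in> \<C>" "Vset n (\<C> - {C}) \<subseteq> Vcirc n C"
  shows "\<exists>C1\<in>\<C>. \<exists>C2\<in>\<C>. card (C1 \<inter> C2) = 1 \<and> sym_diff C1 C2 = C"
proof -
  have notin_Vcirc_iff: "dip_point n S \<notin> Vcirc n D \<longleftrightarrow> (\<exists>a\<in>D - S. D - {a} \<subseteq> S)"
    if "D \<in> \<C>" for D S
    by (rule dip_point_notin_Vcirc_iff[OF matroid_circuits_subset[OF assms(1) that] assms(3)[OF that]])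
  have "C \<noteq> {}"
    using assms(3)[OF assms(4)] by auto
  then obtain i where "i \<in> C"
    by blast
  let ?x = "dip_point n (C - {i})"
  have "\<exists>a\<in>C - (C - {i}). C - {a} \<subseteq> C - {i}"
    using \<open>i \<in> C\<close> by blast
  then have "?x \<notin> Vcirc n C"
    using notin_Vcirc_iff[OF assms(4)] by blast
  moreover have "?x \<in> TP n"
    using matroid_circuits_subset[OF assms(1,4)] \<open>i \<in> C\<close> by (intro dip_point_TP) auto
  ultimately obtain D where D: "D \<in> \<C>" "D \<noteq> C" "?x \<notin> Vcirc n D"
    using assms(5) unfolding Vset_def by blast
  then have "\<exists>a\<in>D - (C - {i}). D - {a} \<subseteq> C - {i}"
    using notin_Vcirc_iff[OF D(1)] by blast
  then obtain a where a: "a \<in> D" "D - {a} \<subseteq> C - {i}"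
    by blast
  have "a \<notin> C"
  proof
    assume "a \<in> C"
    then have "D \<subseteq> C"
      using a by blast
    then show False
      using matroid_circuits_antichain[OF assms(1) D(1) assms(4)] D(2) by blast
  qed
  have "D \<noteq> {a}"
    using assms(3)[OF D(1)] by auto
  then have "insert a (C - D) \<in> \<C>"
    using binary_insert_diff_circuit[OF assms(1,2,4) D(1)] a \<open>a \<notin> C\<close> by blast
  moreover have "D \<inter> insert a (C - D) = {a}" "sym_diff D (insert a (C - D)) = C"
    using a \<open>a \<notin> C\<close> by auto
  ultimately show ?thesis
    using D(1) by (metis is_singleton_altdef is_singleton_def)
qed

lemma split_circuit_redundant:
  assumes "C1 \<in> \<C>" "C2 \<in> \<C>" "finite C1" "finite C2" "C1 \<inter> C2 = {e}"
  shows "Vset n (\<C> - {sym_diff C1 C2}) \<subseteq> Vcirc n (sym_diff C1 C2)"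
proof -
  have "C1 \<in> \<C> - {sym_diff C1 C2}" "C2 \<in> \<C> - {sym_diff C1 C2}"
    using assms by blast+
  then show ?thesis
    using Vcirc_sym_diff[OF assms(3-5)] unfolding Vset_def by blast
qed

theorem proposition4:
  fixes n :: nat and \<C> :: "nat set set" and C :: "nat set"
  assumes "matroid_circuits n \<C>"
    and "binary_matroid n \<C>"
    and "simple_matroid \<C>"
    and "C \<in> \<C>"
  shows "C \<notin> BM n \<C> \<longleftrightarrow>
         (\<exists>C1\<in>\<C>. \<exists>C2\<in>\<C>. card (C1 \<inter> C2) = 1 \<and> (C1 - C2) \<union> (C2 - C1) = C)"
proof
  assume "C \<notin> BM n \<C>"
  moreover have "2 \<le> card D" if "D \<in> \<C>" for D
    using assms(3) that unfolding simple_matroid_def by fastforce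
  ultimately show "\<exists>C1\<in>\<C>. \<exists>C2\<in>\<C>. card (C1 \<inter> C2) = 1 \<and> sym_diff C1 C2 = C"
    using redundant_circuit_splits notin_BM_iff assms(1,2,4) by blast
next
  assume "\<exists>C1\<in>\<C>. \<exists>C2\<in>\<C>. card (C1 \<inter> C2) = 1 \<and> sym_diff C1 C2 = C"
  then obtain C1 C2 e where C12: "C1 \<in> \<C>" "C2 \<in> \<C>" "C1 \<inter> C2 = {e}" "sym_diff C1 C2 = C"
    by (metis card_1_singletonE)
  moreover have "finite D" if "D \<in> \<C>" for D
    using matroid_circuits_subset[OF assms(1) that] by (rule finite_subset) simp
  ultimately show "C \<notin> BM n \<C>"
    using split_circuit_redundant notin_BM_iff assms(4) by metis
qed

end
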